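(* Suppose that $k<n$ are positive reals and $t\le a$ are positive integers such that $a,t=\alpha_0(n)+O(1)$ and $2\le n/k=t-\Theta(1)$. Then, with $\rho=n/k$, \[ \hat L_0(n,k,t)=\Big(a-\rho-1-\frac{2}{\log2}\Big)(\log n-\log\log n)+\log\mu_a(n)+O(1). \]
   Context: $\alpha_0(n)=2\log_2 n-2\log_2\log_2 n+2\log_2(e/2)+1$, $\mu_a(n)=\binom na2^{-\binom a2}$, $d_i=2^{\binom i2}i!$. For positive integer $t$ and reals $\rho\in(1,t)$, $k>0$: $\tilde L_0(\rho,k,t)=\sup\{\rho\log(\rho k)-\log k-\rho+1-\sum_{i=1}^tp_i\log(p_id_i)\}$, the supremum over $(p_i)_{i=1}^t\in[0,1]^t$ with $\sum_ip_i=1$, $\sum_iip_i=\rho$ (with $0\log0=0$); and $\hat L_0(n,k,t)=\tilde L_0(n/k,k,t)$. Logarithms are natural; asymptotics are as $n\to\infty$ with the implicit constants in the hypotheses fixed. *)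

theory Defs
  imports "HOL-Analysis.Analysis"
begin

definition alpha0 :: "real \<Rightarrow> real" where
  "alpha0 n = 2 * log 2 n - 2 * log 2 (log 2 n) + 2 * log 2 (exp 1 / 2) + 1"

definition mu :: "nat \<Rightarrow> real \<Rightarrow> real" where
  "mu a n = (n gchoose a) * 2 powr (- real (a choose 2))"

definition dcoef :: "nat \<Rightarrow> real" where
  "dcoef i = 2 ^ (i choose 2) * fact i"

definition plogpd :: "real \<Rightarrow> real \<Rightarrow> real" where
  "plogpd p d = (if p = 0 then 0 else p * ln (p * d))"

definition L0tilde :: "real \<Rightarrow> real \<Rightarrow> nat \<Rightarrow> real" where
  "L0tilde \<rho> k t = Sup {\<rho> * ln (\<rho> * k) - ln k - \<rho> + 1 - (\<Sum>i=1..t. plogpd (p i) (dcoef i)) | p.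
       (\<forall>i\<in>{1..t}. 0 \<le> p i \<and> p i \<le> 1) \<and> (\<Sum>i=1..t. p i) = 1 \<and> (\<Sum>i=1..t. real i * p i) = \<rho>}"

definition L0hat :: "real \<Rightarrow> real \<Rightarrow> nat \<Rightarrow> real" where
  "L0hat n k t = L0tilde (n / k) k t"

end

theory Submission
  imports Defs "HOL-Real_Asymp.Real_Asymp"
begin

(* Write m = floor rho. Since i |-> ln d_i is convex, with increments i ln 2 + ln (i + 1) that grow
   by at least ln 2, Gibbs' inequality against the weights 2^-|i - m| shows that the entropy sum
   is, up to an additive constant, at least the linear interpolation of ln d_i at rho; and this value
   is attained by putting all mass on m and m + 1. So L0tilde equals an explicit expression up to O(1).
   Comparing it with the target: a ln 2 = 2 (ln n - ln ln n) + O(1) forces rho = Theta(ln n), hence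
   ln rho = ln ln n + O(1); ln a! - ln m! = (rho - m) ln (m + 1) + (a - rho) ln rho + O(1); and
   ln binom(n, a) = a ln n - ln a! + O(1) because a^2 = o(n). After these substitutions all terms of
   order ln n cancel exactly. *)

lemma real_choose_two: "real (n choose 2) = real n * (real n - 1) / 2"
proof -
  have "real (n choose 2) = (real n gchoose 2)" by (simp add: binomial_gbinomial)
  also have "\<dots> = real n * (real n - 1) / 2"
    by (simp add: gbinomial_prod_rev numeral_2_eq_2 prod.atLeast0_lessThan_Suc)
  finally show ?thesis .
qed

lemma dcoef_pos: "0 < dcoef i"
  by (simp add: dcoef_def)

lemma ln_dcoef: "ln (dcoef i) = real (i choose 2) * ln 2 + ln (fact i)"
  by (simp add: dcoef_def ln_mult ln_realpow)

lemma ln_dcoef_Suc: "ln (dcoef (Suc m)) = ln (dcoef m) + real m * ln 2 + ln (real m + 1)"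
proof -
  have "ln (fact (Suc m) :: real) = ln (fact m) + ln (real m + 1)"
    by (simp add: ln_mult add.commute)
  then show ?thesis unfolding ln_dcoef real_choose_two by (simp add: field_simps)
qed

lemma ln_fact_diff_eq_sum:
  assumes "m \<le> i"
  shows "ln (fact i :: real) - ln (fact m) = (\<Sum>j\<in>{m<..i}. ln (real j))"
  using assms
proof (induction i rule: dec_induct)
  case (step i)
  have "{m<..Suc i} = insert (Suc i) {m<..i}" using step.hyps by auto
  then show ?case using step.IH by (simp add: ln_mult add.commute)
qed simp

lemma ln_fact_diff_le:
  assumes "m \<le> i"
  shows "ln (fact i :: real) - ln (fact m) \<le> (real i - real m) * ln (real i)"
proof -
  have "(\<Sum>j\<in>{m<..i}. ln (real j)) \<le> of_nat (card {m<..i}) * ln (real i)"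
    by (intro sum_bounded_above) auto
  then show ?thesis using assms by (simp add: ln_fact_diff_eq_sum of_nat_diff)
qed

lemma ln_fact_diff_ge: "(real i - real m) * ln (real m + 1) \<le> ln (fact i :: real) - ln (fact m)"
proof (cases "m \<le> i")
  case True
  have "of_nat (card {m<..i}) * ln (real m + 1) \<le> (\<Sum>j\<in>{m<..i}. ln (real j))"
    by (intro sum_bounded_below) auto
  then show ?thesis using True by (simp add: ln_fact_diff_eq_sum of_nat_diff)
next
  case False
  then have "(real m - real i) * ln (real m) \<le> (real m - real i) * ln (real m + 1)"
    by (intro mult_left_mono) auto
  then show ?thesis using ln_fact_diff_le[of i m] False by (simp add: algebra_simps)
qed

lemma int_abs_le_choose_two: "2 * \<bar>j\<bar> - 2 \<le> (j::int) * (j - 1)"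
proof -
  have "0 \<le> (\<bar>j\<bar> - 1) * (\<bar>j\<bar> - 2)"
    by (cases "\<bar>j\<bar> \<le> 1") (auto intro: mult_nonpos_nonpos)
  then show ?thesis by (cases "0 \<le> j") (auto simp: algebra_simps)
qed

lemma ln_dcoef_convex:
  "ln (dcoef m) + (real i - real m) * (ln (dcoef (Suc m)) - ln (dcoef m))
     + (\<bar>real i - real m\<bar> - 1) * ln 2 \<le> ln (dcoef i)"
proof -
  have slope: "ln (dcoef (Suc m)) - ln (dcoef m) = real m * ln 2 + ln (real m + 1)"
    using ln_dcoef_Suc by simp
  have "real_of_int (2 * \<bar>int i - int m\<bar> - 2) \<le> of_int ((int i - int m) * (int i - int m - 1))"
    using int_abs_le_choose_two of_int_le_iff by blast
  then have "2 * \<bar>real i - real m\<bar> - 2 \<le> (real i - real m) * (real i - real m - 1)"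
    by simp
  then have "(\<bar>real i - real m\<bar> - 1) * ln 2 \<le> (real i - real m) * (real i - real m - 1) / 2 * ln 2"
    by (intro mult_right_mono) auto
  moreover have "real (i choose 2) * ln 2 = real (m choose 2) * ln 2 + (real i - real m) * (real m * ln 2)
      + (real i - real m) * (real i - real m - 1) / 2 * ln 2"
    unfolding real_choose_two by (simp add: field_simps)
  moreover have "(real i - real m) * (real m * ln 2 + ln (real m + 1))
      = (real i - real m) * (real m * ln 2) + (real i - real m) * ln (real m + 1)"
    by (simp add: distrib_left)
  ultimately show ?thesis
    unfolding slope using ln_fact_diff_ge[of i m] ln_dcoef[of i] ln_dcoef[of m] by linarith
qed

lemma plogpd_ge:
  assumes "0 \<le> p" "0 < u" "0 < d"
  shows "p * ln (u * d) + p - u \<le> plogpd p d"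
proof (cases "p = 0")
  case False
  with assms have p: "0 < p" by simp
  have "p * ln (u / p) \<le> p * (u / p - 1)"
    using p assms by (intro mult_left_mono ln_le_minus_one) auto
  moreover have "ln (p * d) = ln (u * d) - ln (u / p)"
    using p assms by (simp add: ln_mult ln_div)
  ultimately show ?thesis
    using p False by (simp add: plogpd_def right_diff_distrib)
qed (use assms in \<open>simp add: plogpd_def\<close>)

lemma plogpd_le:
  assumes "0 \<le> p" "p \<le> 1" "0 < d"
  shows "plogpd p d \<le> p * ln d"
proof (cases "p = 0")
  case False
  with assms have "0 < p" "ln p \<le> 0" by auto
  then show ?thesis
    using assms by (simp add: plogpd_def ln_mult distrib_left mult_nonneg_nonpos)
qed (simp add: plogpd_def)

lemma sum_two_sided_geometric_le:
  fixes x :: real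
  assumes "0 \<le> x" "x < 1"
  shows "(\<Sum>i<M. x ^ (if i < m then m - i else i - m)) \<le> (1 + x) / (1 - x)"
proof -
  have geometric: "(\<Sum>j<N. x ^ j) \<le> 1 / (1 - x)" for N
    using assms by (simp add: sum_gp_strict divide_right_mono)
  have "(\<Sum>i<M. x ^ (if i < m then m - i else i - m))
      \<le> (\<Sum>i\<in>{..<m} \<union> {m..<m + M}. x ^ (if i < m then m - i else i - m))"
    using assms by (intro sum_mono2) auto
  also have "\<dots> = (\<Sum>i<m. x ^ (m - i)) + (\<Sum>i\<in>{m..<m + M}. x ^ (i - m))"
    by (subst sum.union_disjoint) auto
  also have "(\<Sum>i<m. x ^ (m - i)) = x * (\<Sum>j<m. x ^ j)"
    by (subst sum.nat_diff_reindex[symmetric]) (simp add: Suc_diff_Suc sum_distrib_left)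
  also have "(\<Sum>i\<in>{m..<m + M}. x ^ (i - m)) = (\<Sum>j<M. x ^ j)"
    using sum.atLeastLessThan_shift_0[of "\<lambda>i. x ^ (i - m)" m "m + M"] by (simp add: lessThan_atLeast0)
  also have "x * (\<Sum>j<m. x ^ j) + (\<Sum>j<M. x ^ j) \<le> x * (1 / (1 - x)) + 1 / (1 - x)"
    using assms by (intro add_mono mult_left_mono geometric) auto
  also have "\<dots> = (1 + x) / (1 - x)"
    by (simp add: add_divide_distrib)
  finally show ?thesis .
qed

definition L0_feasible :: "real \<Rightarrow> nat \<Rightarrow> (nat \<Rightarrow> real) \<Rightarrow> bool" where
  "L0_feasible \<rho> t p \<longleftrightarrow> (\<forall>i\<in>{1..t}. 0 \<le> p i \<and> p i \<le> 1) \<and> (\<Sum>i=1..t. p i) = 1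
     \<and> (\<Sum>i=1..t. real i * p i) = \<rho>"

definition ln_dcoef_interp :: "real \<Rightarrow> nat \<Rightarrow> real" where
  "ln_dcoef_interp \<rho> m = ln (dcoef m) + (\<rho> - real m) * (ln (dcoef (Suc m)) - ln (dcoef m))"

lemma L0tilde_eq_Sup:
  "L0tilde \<rho> k t = Sup {\<rho> * ln (\<rho> * k) - ln k - \<rho> + 1 - (\<Sum>i=1..t. plogpd (p i) (dcoef i)) | p.
     L0_feasible \<rho> t p}"
  unfolding L0tilde_def L0_feasible_def ..

lemma entropy_sum_ge:
  assumes "L0_feasible \<rho> t p"
  shows "ln_dcoef_interp \<rho> m - ln 2 - 2 \<le> (\<Sum>i=1..t. plogpd (p i) (dcoef i))"
proof -
  define e where "e i = (if i < m then m - i else i - m)" for i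
  define u where "u i = (1 / 2 :: real) ^ e i" for i
  define s where "s = ln (dcoef (Suc m)) - ln (dcoef m)"
  have p: "0 \<le> p i" if "i \<in> {1..t}" for i
    using assms that by (auto simp: L0_feasible_def)
  have ln_ud: "ln (dcoef m) + (real i - real m) * s - ln 2 \<le> ln (u i * dcoef i)" for i
  proof -
    have "real (e i) = \<bar>real i - real m\<bar>"
      by (simp add: e_def of_nat_diff)
    then have "ln (u i * dcoef i) = ln (dcoef i) - \<bar>real i - real m\<bar> * ln 2"
      using dcoef_pos[of i] by (simp add: u_def ln_mult ln_realpow ln_div)
    then show ?thesis
      using ln_dcoef_convex[of m i] unfolding s_def by (simp add: algebra_simps)
  qed
  have "(\<Sum>i=1..t. u i) \<le> (\<Sum>i<Suc t. u i)"
    by (intro sum_mono2) (auto simp: u_def)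
  also have "\<dots> \<le> (1 + 1 / 2) / (1 - 1 / 2)"
    unfolding u_def e_def by (rule sum_two_sided_geometric_le) auto
  finally have u_sum: "(\<Sum>i=1..t. u i) \<le> 3"
    by simp
  have sums: "(\<Sum>i=1..t. p i) = 1" "(\<Sum>i=1..t. real i * p i) = \<rho>"
    using assms by (auto simp: L0_feasible_def)
  have "ln_dcoef_interp \<rho> m - ln 2 + 1 - 3
      \<le> (ln (dcoef m) - real m * s - ln 2) * (\<Sum>i=1..t. p i) + s * (\<Sum>i=1..t. real i * p i)
         + (\<Sum>i=1..t. p i) - (\<Sum>i=1..t. u i)"
    using u_sum unfolding sums ln_dcoef_interp_def s_def by (simp add: algebra_simps)
  also have "\<dots> = (\<Sum>i=1..t. (ln (dcoef m) - real m * s - ln 2) * p i + s * (real i * p i) + p i - u i)"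
    by (simp add: sum.distrib sum_subtractf sum_distrib_left)
  also have "\<dots> \<le> (\<Sum>i=1..t. p i * ln (u i * dcoef i) + p i - u i)"
  proof (intro sum_mono)
    fix i assume "i \<in> {1..t}"
    then have "p i * (ln (dcoef m) + (real i - real m) * s - ln 2) \<le> p i * ln (u i * dcoef i)"
      using ln_ud p by (intro mult_left_mono)
    then show "(ln (dcoef m) - real m * s - ln 2) * p i + s * (real i * p i) + p i - u i
        \<le> p i * ln (u i * dcoef i) + p i - u i"
      by (simp add: algebra_simps)
  qed
  also have "\<dots> \<le> (\<Sum>i=1..t. plogpd (p i) (dcoef i))"
    by (intro sum_mono plogpd_ge) (auto simp: p u_def dcoef_pos)
  finally show ?thesis
    by simp
qed

lemma entropy_sum_attained:
  assumes "1 \<le> m" "m < t" "real m \<le> \<rho>" "\<rho> \<le> real m + 1"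
  shows "\<exists>p. L0_feasible \<rho> t p \<and> (\<Sum>i=1..t. plogpd (p i) (dcoef i)) \<le> ln_dcoef_interp \<rho> m"
proof -
  define p where
    "p i = (if i = m then real m + 1 - \<rho> else 0) + (if i = Suc m then \<rho> - real m else 0)" for i
  have mem: "m \<in> {1..t}" "Suc m \<in> {1..t}"
    using assms by auto
  have sum_p: "(\<Sum>i=1..t. p i * g i) = (real m + 1 - \<rho>) * g m + (\<rho> - real m) * g (Suc m)"
    for g :: "nat \<Rightarrow> real"
  proof -
    have "p i * g i = (if i = m then (real m + 1 - \<rho>) * g i else 0)
        + (if i = Suc m then (\<rho> - real m) * g i else 0)" for i
      unfolding p_def by (simp add: distrib_right)
    then have "(\<Sum>i=1..t. p i * g i) = (\<Sum>i=1..t. if i = m then (real m + 1 - \<rho>) * g i else 0)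
        + (\<Sum>i=1..t. if i = Suc m then (\<rho> - real m) * g i else 0)"
      by (simp add: sum.distrib)
    then show ?thesis
      using mem by (simp only: sum.delta finite_atLeastAtMost if_True)
  qed
  have p_range: "0 \<le> p i \<and> p i \<le> 1" for i
    using assms by (auto simp: p_def)
  have "L0_feasible \<rho> t p"
    unfolding L0_feasible_def using p_range sum_p[of "\<lambda>_. 1"] sum_p[of real]
    by (simp add: algebra_simps)
  moreover have "(\<Sum>i=1..t. plogpd (p i) (dcoef i)) \<le> (\<Sum>i=1..t. p i * ln (dcoef i))"
    by (intro sum_mono plogpd_le) (auto simp: p_range dcoef_pos)
  moreover have "(\<Sum>i=1..t. p i * ln (dcoef i)) = ln_dcoef_interp \<rho> m"
    unfolding sum_p ln_dcoef_interp_def by (simp add: algebra_simps)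
  ultimately show ?thesis
    by auto
qed

lemma L0tilde_bounds:
  fixes \<rho> k :: real
  assumes "1 \<le> m" "m < t" "real m \<le> \<rho>" "\<rho> \<le> real m + 1"
  defines "base \<equiv> \<rho> * ln (\<rho> * k) - ln k - \<rho> + 1 - ln_dcoef_interp \<rho> m"
  shows "base \<le> L0tilde \<rho> k t" and "L0tilde \<rho> k t \<le> base + ln 2 + 2"
proof -
  define S where "S = {\<rho> * ln (\<rho> * k) - ln k - \<rho> + 1 - (\<Sum>i=1..t. plogpd (p i) (dcoef i)) | p.
     L0_feasible \<rho> t p}"
  have upper: "x \<le> base + ln 2 + 2" if "x \<in> S" for x
    using that entropy_sum_ge[of \<rho> t _ m] unfolding S_def base_def by force
  obtain p where p: "L0_feasible \<rho> t p" "(\<Sum>i=1..t. plogpd (p i) (dcoef i)) \<le> ln_dcoef_interp \<rho> m"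
    using entropy_sum_attained[OF assms(1-4)] by blast
  define x where "x = \<rho> * ln (\<rho> * k) - ln k - \<rho> + 1 - (\<Sum>i=1..t. plogpd (p i) (dcoef i))"
  have "x \<in> S"
    unfolding S_def x_def using p(1) by blast
  have "base \<le> x"
    unfolding base_def x_def using p(2) by simp
  also have "x \<le> Sup S"
    using \<open>x \<in> S\<close> upper by (intro cSup_upper) (auto simp: bdd_above_def)
  finally show "base \<le> L0tilde \<rho> k t"
    unfolding L0tilde_eq_Sup S_def .
  show "L0tilde \<rho> k t \<le> base + ln 2 + 2"
    unfolding L0tilde_eq_Sup S_def[symmetric] using \<open>x \<in> S\<close> upper by (intro cSup_least) auto
qed

lemma gchoose_bounds:
  fixes n :: real
  assumes "2 * (real a)\<^sup>2 \<le> n" "0 < n"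
  shows "n ^ a / (2 * fact a) \<le> n gchoose a" and "n gchoose a \<le> n ^ a / fact a"
proof -
  define P where "P = (\<Prod>i<a. n - real i)"
  have gchoose_eq: "n gchoose a = P / fact a"
    unfolding P_def by (simp add: gbinomial_prod_rev atLeast0LessThan)
  have a_le_n: "real a \<le> n"
    using assms by (cases a) (auto simp: power2_eq_square intro: order_trans[rotated])
  have "(n - real a) ^ a \<le> P"
    using prod_mono[of "{..<a}" "\<lambda>_. n - real a" "\<lambda>i. n - real i"] a_le_n by (simp add: P_def)
  moreover have "1 / 2 \<le> (1 - real a / n) ^ a"
  proof -
    have "1 / 2 \<le> 1 + real a * (- (real a / n))"
      using assms by (simp add: field_simps power2_eq_square)
    also have "\<dots> \<le> (1 - real a / n) ^ a"
      using Bernoulli_inequality[of "- (real a / n)" a] a_le_n assms by simp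
    finally show ?thesis .
  qed
  then have "n ^ a / 2 \<le> (n - real a) ^ a"
    using assms by (simp add: field_simps power_divide flip: power_mult_distrib)
  ultimately show "n ^ a / (2 * fact a) \<le> n gchoose a"
    unfolding gchoose_eq by (simp add: divide_right_mono flip: divide_divide_eq_left)
  have "P \<le> n ^ a"
    using prod_mono[of "{..<a}" "\<lambda>i. n - real i" "\<lambda>_. n"] a_le_n by (simp add: P_def)
  then show "n gchoose a \<le> n ^ a / fact a"
    unfolding gchoose_eq by (simp add: divide_right_mono)
qed

lemma ln_mu_bounds:
  assumes "2 * (real a)\<^sup>2 \<le> n" "0 < n"
  defines "main \<equiv> real a * ln n - ln (fact a) - real a * (real a - 1) / 2 * ln 2"
  shows "main - ln 2 \<le> ln (mu a n)" and "ln (mu a n) \<le> main"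
proof -
  have pos: "0 < n ^ a / (2 * fact a)"
    using assms by simp
  have ln_mu: "ln (mu a n) = ln (n gchoose a) - real a * (real a - 1) / 2 * ln 2"
    using pos gchoose_bounds(1)[OF assms(1,2)] by (simp add: mu_def ln_mult real_choose_two)
  have "ln (n ^ a / (2 * fact a)) \<le> ln (n gchoose a)"
    using pos gchoose_bounds(1)[OF assms(1,2)] by simp
  then show "main - ln 2 \<le> ln (mu a n)"
    using assms by (simp add: ln_mu main_def ln_div ln_mult ln_realpow)
  have "ln (n gchoose a) \<le> ln (n ^ a / fact a)"
    using pos gchoose_bounds[OF assms(1,2)] by simp
  then show "ln (mu a n) \<le> main"
    using assms by (simp add: ln_mu main_def ln_div ln_realpow)
qed

lemma mult_ln2_close_of_alpha0:
  fixes x C :: real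
  assumes "1 < n" "\<bar>x - alpha0 n\<bar> \<le> C"
  shows "\<bar>x * ln 2 - 2 * (ln n - ln (ln n))\<bar> \<le> C + \<bar>2 * ln (ln 2) + 2 - ln 2\<bar>"
proof -
  have "alpha0 n * ln 2 = 2 * (ln n - ln (ln n)) + (2 * ln (ln 2) + 2 - ln 2)"
    using assms(1) by (simp add: alpha0_def log_def ln_div field_simps)
  then have "x * ln 2 - 2 * (ln n - ln (ln n)) = (x - alpha0 n) * ln 2 + (2 * ln (ln 2) + 2 - ln 2)"
    by (simp add: algebra_simps)
  moreover have "\<bar>(x - alpha0 n) * ln 2\<bar> \<le> C"
    using assms(2) ln_2_less_1 mult_left_le[of "ln 2" "\<bar>x - alpha0 n\<bar>"] by (simp add: abs_mult)
  ultimately show ?thesis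
    by linarith
qed

lemma ln_fact_interp_bounds:
  fixes \<rho> :: real
  assumes "0 < \<rho>" "real m \<le> \<rho>" "\<rho> \<le> real m + 1" "\<rho> \<le> real a"
  defines "err \<equiv> ln (fact a) - ln (fact m) - (\<rho> - real m) * ln (real m + 1) - (real a - \<rho>) * ln \<rho>"
  shows "0 \<le> err" and "err \<le> (real a - \<rho> + 1) * (real a - \<rho>) / \<rho>"
proof -
  have ln_\<rho>: "ln \<rho> \<le> ln (real m + 1)"
    using assms by simp
  have "(real a - real m) * ln (real m + 1) \<le> ln (fact a) - ln (fact m)"
    by (rule ln_fact_diff_ge)
  moreover have "(real a - \<rho>) * ln \<rho> \<le> (real a - \<rho>) * ln (real m + 1)"
    using ln_\<rho> assms by (intro mult_left_mono) auto
  ultimately show "0 \<le> err"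
    unfolding err_def by (simp add: algebra_simps)
  have ln_a: "ln (real a) \<le> ln \<rho> + (real a - \<rho>) / \<rho>"
    using ln_le_minus_one[of "real a / \<rho>"] assms by (simp add: ln_div diff_divide_distrib)
  have "ln (fact a) - ln (fact m) \<le> (real a - real m) * ln (real a)"
    using assms by (intro ln_fact_diff_le) simp
  also have "\<dots> \<le> (real a - real m) * (ln \<rho> + (real a - \<rho>) / \<rho>)"
    using ln_a assms by (intro mult_left_mono) auto
  also have "\<dots> = (\<rho> - real m) * ln \<rho> + (real a - \<rho>) * ln \<rho> + (real a - real m) * (real a - \<rho>) / \<rho>"
    by (simp add: algebra_simps)
  also have "\<dots> \<le> (\<rho> - real m) * ln (real m + 1) + (real a - \<rho>) * ln \<rho>
      + (real a - \<rho> + 1) * (real a - \<rho>) / \<rho>"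
    using ln_\<rho> assms by (intro add_mono mult_left_mono divide_right_mono mult_right_mono) auto
  finally show "err \<le> (real a - \<rho> + 1) * (real a - \<rho>) / \<rho>"
    unfolding err_def by simp
qed

lemma ln_close_of_mult_ln2_eq:
  fixes \<rho> L E :: real
  assumes "1 \<le> L" "ln L \<le> L / 4" "\<bar>E\<bar> \<le> L / 4" "\<rho> * ln 2 = 2 * (L - ln L) + E"
  shows "L \<le> \<rho>" and "\<rho> \<le> 4 * L" and "0 \<le> ln \<rho> - ln L" and "ln \<rho> - ln L \<le> 2"
proof -
  have "0 \<le> ln L"
    using assms(1) by simp
  then have lower: "L \<le> \<rho> * ln 2" and upper: "\<rho> * ln 2 \<le> 9 / 4 * L"
    using assms(2-4) by (simp_all add: abs_le_iff)
  then have "0 < \<rho> * ln 2"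
    using assms(1) by linarith
  then have "0 < \<rho>"
    by (simp add: zero_less_mult_iff)
  have "\<rho> * ln 2 \<le> \<rho>"
    using \<open>0 < \<rho>\<close> ln_2_less_1 by (intro mult_left_le) auto
  then show "L \<le> \<rho>"
    using lower by simp
  have "\<rho> * (2 / 3) \<le> \<rho> * ln 2"
    using ln2_ge_two_thirds \<open>0 < \<rho>\<close> by (intro mult_left_mono) auto
  then show "\<rho> \<le> 4 * L"
    using upper assms(1) by simp
  show "0 \<le> ln \<rho> - ln L"
    using \<open>L \<le> \<rho>\<close> assms(1) by simp
  have "ln \<rho> \<le> ln (4 * L)"
    using \<open>\<rho> \<le> 4 * L\<close> \<open>0 < \<rho>\<close> by simp
  also have "\<dots> = 2 * ln 2 + ln L"
    using assms(1) ln_realpow[of 2 2] by (simp add: ln_mult)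
  finally show "ln \<rho> - ln L \<le> 2"
    using ln_2_less_1 by simp
qed

definition main_term_remainder :: "real \<Rightarrow> real \<Rightarrow> real \<Rightarrow> real \<Rightarrow> real \<Rightarrow> real" where
  "main_term_remainder \<delta> f E\<Lambda> Ef Ea = - ((\<delta> + 1) * E\<Lambda>) - Ef + (1 / ln 2 - \<delta>) * Ea - (\<delta> + 1)
     + ln 2 * (\<delta> * (\<delta> + 1) + f * (1 - f)) / 2"

lemma main_term_difference_eq:
  fixes \<rho> L :: real and a m :: nat
  defines "\<delta> \<equiv> real a - \<rho>" and "f \<equiv> \<rho> - real m"
  shows "(real a - \<rho> - 1 - 2 / ln 2) * (L - ln L)
           + (real a * L - ln (fact a) - real a * (real a - 1) / 2 * ln 2)
           - ((\<rho> - 1) * L + ln \<rho> - \<rho> + 1 - ln_dcoef_interp \<rho> m)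
      = main_term_remainder \<delta> f (ln \<rho> - ln L)
          (ln (fact a) - ln (fact m) - f * ln (real m + 1) - \<delta> * ln \<rho>)
          (real a * ln 2 - 2 * (L - ln L))"
  unfolding main_term_remainder_def ln_dcoef_interp_def ln_dcoef_Suc ln_dcoef[of m] real_choose_two
    \<delta>_def f_def
  by (simp add: field_simps)

lemma main_term_remainder_bound:
  assumes "2 \<le> \<rho>" "0 < \<delta>" "\<delta> \<le> B" "0 \<le> f" "f \<le> 1" "0 \<le> E\<Lambda>" "E\<Lambda> \<le> 2"
    "0 \<le> Ef" "Ef \<le> (\<delta> + 1) * \<delta> / \<rho>" "\<bar>Ea\<bar> \<le> K"
  shows "\<bar>main_term_remainder \<delta> f E\<Lambda> Ef Ea\<bar> \<le> (B + 2) * (B + 2 + K) - 1"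
proof -
  have "(\<delta> + 1) * E\<Lambda> \<le> (B + 1) * 2"
    using assms by (intro mult_mono) auto
  moreover have "0 \<le> (\<delta> + 1) * E\<Lambda>"
    using assms by simp
  moreover have "(\<delta> + 1) * \<delta> / \<rho> \<le> (B + 1) * B / 2"
    using assms by (intro frac_le mult_mono) auto
  moreover have scale_term: "\<bar>(1 / ln 2 - \<delta>) * Ea\<bar> \<le> (B + 2) * K"
  proof -
    have "1 / ln 2 \<le> (3 / 2 :: real)" "0 < 1 / ln (2 :: real)"
      using ln2_ge_two_thirds by (simp_all add: divide_le_eq)
    then have "\<bar>1 / ln 2 - \<delta>\<bar> \<le> B + 2"
      using assms by (intro abs_leI) linarith+
    then show ?thesis
      unfolding abs_mult using assms by (intro mult_mono) auto
  qed
  moreover have "0 \<le> ln 2 * (\<delta> * (\<delta> + 1) + f * (1 - f)) / 2"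
    using assms by simp
  moreover have "ln 2 * (\<delta> * (\<delta> + 1) + f * (1 - f)) / 2 \<le> 1 * (B * (B + 1) + 1) / 2"
    using assms ln_2_less_1 by (intro divide_right_mono mult_mono add_mono mult_le_one) auto
  moreover have "(B + 1) * 2 + (B + 1) * B / 2 + (B + 2) * K + (B + 1) \<le> (B + 2) * (B + 2 + K) - 1"
    and "(B + 2) * K - 1 + 1 * (B * (B + 1) + 1) / 2 \<le> (B + 2) * (B + 2 + K) - 1"
    using assms mult_nonneg_nonneg[of B B] by (simp_all add: algebra_simps)
  ultimately show ?thesis
    unfolding main_term_remainder_def using assms abs_le_D1[OF scale_term] abs_le_D2[OF scale_term]
    by (intro abs_leI) linarith+
qed

lemma main_term_error_bound:
  fixes n \<rho> B K :: real and a :: nat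
  defines "L \<equiv> ln n"
  assumes rho: "2 \<le> \<rho>" and gap: "0 < real a - \<rho>" "real a - \<rho> \<le> B"
    and scale: "\<bar>real a * ln 2 - 2 * (L - ln L)\<bar> \<le> K"
    and large: "3 \<le> n" "ln L \<le> L / 4" "4 * (K + B) \<le> L" "50 * L\<^sup>2 \<le> n"
  shows "\<bar>(real a - \<rho> - 1 - 2 / ln 2) * (L - ln L) + ln (mu a n)
           - ((\<rho> - 1) * L + ln \<rho> - \<rho> + 1 - ln_dcoef_interp \<rho> (nat \<lfloor>\<rho>\<rfloor>))\<bar> \<le> (B + 2) * (B + 2 + K)"
proof -
  define m where "m = nat \<lfloor>\<rho>\<rfloor>"
  define \<delta> where "\<delta> = real a - \<rho>"
  define f where "f = \<rho> - real m"
  define Ea where "Ea = real a * ln 2 - 2 * (L - ln L)"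
  define Ef where "Ef = ln (fact a) - ln (fact m) - f * ln (real m + 1) - \<delta> * ln \<rho>"
  have m: "real m \<le> \<rho>" "\<rho> \<le> real m + 1"
    unfolding m_def using rho by linarith+
  have "exp 1 \<le> n"
    using exp_le large(1) by linarith
  then have L1: "1 \<le> L"
    unfolding L_def using ln_mono[of "exp 1" n] by simp
  have \<delta>: "0 < \<delta>" "\<delta> \<le> B"
    using gap unfolding \<delta>_def by auto
  have Ea: "\<bar>Ea\<bar> \<le> K"
    using scale unfolding Ea_def .
  have KB: "K + B \<le> L / 4"
    using large(3) by simp
  moreover have "0 \<le> \<delta> * ln 2" "\<delta> * ln 2 \<le> \<delta>"
    using \<delta> ln_2_less_1 by (auto intro: mult_left_le)
  ultimately have Ea_small: "\<bar>Ea - \<delta> * ln 2\<bar> \<le> L / 4"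
    using abs_le_D1[OF Ea] abs_le_D2[OF Ea] \<delta> by (intro abs_leI) linarith+
  have "\<rho> * ln 2 = 2 * (L - ln L) + (Ea - \<delta> * ln 2)"
    unfolding Ea_def \<delta>_def by (simp add: algebra_simps)
  note close = ln_close_of_mult_ln2_eq[OF L1 large(2) Ea_small this]
  have "real a \<le> 5 * L"
    using close(2) \<delta> KB order_trans[OF abs_ge_zero Ea] unfolding \<delta>_def by linarith
  then have "(real a)\<^sup>2 \<le> (5 * L)\<^sup>2"
    by (intro power_mono) auto
  then have "2 * (real a)\<^sup>2 \<le> n"
    using large(4) by (simp add: power_mult_distrib)
  note ln_mu = ln_mu_bounds[OF this, folded L_def]
  have "\<bar>main_term_remainder \<delta> f (ln \<rho> - ln L) Ef Ea\<bar> \<le> (B + 2) * (B + 2 + K) - 1"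
    using ln_fact_interp_bounds[of \<rho> m a] m rho \<delta> close Ea
    unfolding f_def Ef_def \<delta>_def by (intro main_term_remainder_bound) auto
  moreover have "(real a - \<rho> - 1 - 2 / ln 2) * (L - ln L)
           + (real a * L - ln (fact a) - real a * (real a - 1) / 2 * ln 2)
           - ((\<rho> - 1) * L + ln \<rho> - \<rho> + 1 - ln_dcoef_interp \<rho> m)
      = main_term_remainder \<delta> f (ln \<rho> - ln L) Ef Ea"
    unfolding \<delta>_def f_def Ef_def Ea_def by (rule main_term_difference_eq)
  ultimately show ?thesis
    using ln_mu large(1) ln_2_less_1 unfolding m_def by (simp add: abs_le_iff)
qed

lemma L0hat_bounds:
  fixes n k :: real
  defines "\<rho> \<equiv> n / k"
  defines "G \<equiv> (\<rho> - 1) * ln n + ln \<rho> - \<rho> + 1 - ln_dcoef_interp \<rho> (nat \<lfloor>\<rho>\<rfloor>)"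
  assumes "0 < k" "1 \<le> \<rho>" "\<rho> < real t"
  shows "G \<le> L0hat n k t" and "L0hat n k t \<le> G + ln 2 + 2"
proof -
  have \<rho>k: "\<rho> * k = n"
    unfolding \<rho>_def using \<open>0 < k\<close> by simp
  have "ln n = ln \<rho> + ln k"
    unfolding \<rho>k[symmetric] using assms(3,4) by (simp add: ln_mult)
  then have "\<rho> * ln (\<rho> * k) - ln k - \<rho> + 1 - ln_dcoef_interp \<rho> (nat \<lfloor>\<rho>\<rfloor>) = G"
    unfolding G_def \<rho>k by (simp add: algebra_simps)
  moreover have "1 \<le> nat \<lfloor>\<rho>\<rfloor>" "nat \<lfloor>\<rho>\<rfloor> < t" "real (nat \<lfloor>\<rho>\<rfloor>) \<le> \<rho>" "\<rho> \<le> real (nat \<lfloor>\<rho>\<rfloor>) + 1"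
    using assms(4,5) by linarith+
  moreover have "L0hat n k t = L0tilde \<rho> k t"
    unfolding L0hat_def \<rho>_def ..
  ultimately show "G \<le> L0hat n k t" and "L0hat n k t \<le> G + ln 2 + 2"
    using L0tilde_bounds[of "nat \<lfloor>\<rho>\<rfloor>" t \<rho> k] by simp_all
qed

theorem lemma39:
  fixes C1 c1 c2 :: real
  assumes "0 < c1" and "c1 \<le> c2"
  shows "\<exists>C N. \<forall>(n::real) (k::real) (a::nat) (t::nat).
     0 < k \<and> k < n \<and> 1 \<le> t \<and> t \<le> a \<and> n \<ge> N \<and>
     \<bar>real a - alpha0 n\<bar> \<le> C1 \<and> \<bar>real t - alpha0 n\<bar> \<le> C1 \<and>
     2 \<le> n / k \<and> c1 \<le> real t - n / k \<and> real t - n / k \<le> c2 \<longrightarrow>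
     \<bar>L0hat n k t - ((real a - n / k - 1 - 2 / ln 2) * (ln n - ln (ln n)) + ln (mu a n))\<bar> \<le> C"
proof -
  define K where "K = \<bar>C1\<bar> + \<bar>2 * ln (ln 2) + 2 - ln 2\<bar>"
  define B where "B = 2 * \<bar>C1\<bar> + \<bar>c2\<bar>"
  have "eventually (\<lambda>n::real. 3 \<le> n \<and> ln (ln n) \<le> ln n / 4 \<and> 4 * (K + B) \<le> ln n
      \<and> 50 * (ln n)\<^sup>2 \<le> n) at_top"
    by (intro eventually_conj; real_asymp)
  then obtain N where N: "\<And>n. N \<le> n \<Longrightarrow> 3 \<le> n \<and> ln (ln n) \<le> ln n / 4 \<and> 4 * (K + B) \<le> ln n
      \<and> 50 * (ln n)\<^sup>2 \<le> n"
    by (auto simp: eventually_at_top_linorder)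
  show ?thesis
  proof (rule exI[of _ "(B + 2) * (B + 2 + K) + 3"], rule exI[of _ N], intro allI impI, elim conjE)
    fix n k :: real and a t :: nat
    assume hyps: "0 < k" "k < n" "1 \<le> t" "t \<le> a" "N \<le> n" "\<bar>real a - alpha0 n\<bar> \<le> C1"
      "\<bar>real t - alpha0 n\<bar> \<le> C1" "2 \<le> n / k" "c1 \<le> real t - n / k" "real t - n / k \<le> c2"
    note large = N[OF \<open>N \<le> n\<close>]
    have "\<bar>real a * ln 2 - 2 * (ln n - ln (ln n))\<bar> \<le> K"
      using mult_ln2_close_of_alpha0[OF _ hyps(6)] large unfolding K_def by force
    moreover have "0 < real a - n / k" "real a - n / k \<le> B"
      using hyps assms unfolding B_def by auto
    ultimately have "\<bar>(real a - n / k - 1 - 2 / ln 2) * (ln n - ln (ln n)) + ln (mu a n) -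
        ((n / k - 1) * ln n + ln (n / k) - n / k + 1 - ln_dcoef_interp (n / k) (nat \<lfloor>n / k\<rfloor>))\<bar>
        \<le> (B + 2) * (B + 2 + K)"
      using large hyps(8) by (intro main_term_error_bound) auto
    moreover have "1 \<le> n / k" "n / k < real t"
      using hyps(8,9) assms(1) by linarith+
    note L0hat = L0hat_bounds[OF hyps(1) this]
    ultimately show "\<bar>L0hat n k t - ((real a - n / k - 1 - 2 / ln 2) * (ln n - ln (ln n)) + ln (mu a n))\<bar>
        \<le> (B + 2) * (B + 2 + K) + 3"
      using L0hat ln_2_less_1 by (simp add: abs_le_iff)
  qed
qed

end
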